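(* Let $\varepsilon>0$, $\beta>0$ and let $\alpha$ be a sufficiently large constant. Let $d$ be large, and let $\mathcal{G}$ be a graph on $\alpha d$ vertices with $\Delta(\mathcal{G})\le\beta\delta(\mathcal{G})$ and $\delta(\mathcal{G})>d^{\varepsilon}$; set $p^-=\delta(\mathcal{G})/(\alpha d)$. Let $G$ be a bipartite graph with stable sets $X$ and $Y$ and maximum degree $d$. Let $\chi$ be a random coloring of $Y$ in which each vertex independently receives a color chosen uniformly at random from $V(\mathcal{G})$. For $x\in X$ and $c\in V(\mathcal{G})$ let $W_{x,c}$ be the number of $y\in N_G(x)$ such that (1) $y$ is the only vertex of color $\chi(y)$ in $N_G(x)$; (2) $\mathbf{Bad}(y,\chi,G)\leq d/\sqrt{\alpha}$; and (3) $c\,\chi(y)\in E(\mathcal{G})$. If $x\in X$ satisfies $d\leq 2d_G(x)$, then for every $c\in V(\mathcal{G})$, $$\Pr\left(W_{x,c}\leq \frac{p^- d_G(x)}{2}\right)=e^{-\Omega(\delta(\mathcal{G}))}.$$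
   Context: For a graph $G$, a partial vertex coloring $\chi$ of $G$ and a colored vertex $v$, $\mathbf{Bad}(v,\chi,G)$ is the number of vertices $u\in N_G(v)$ for which there exists $v'\in N_G(u)$ with $v'\neq v$ and $\chi(v')=\chi(v)$ (i.e. the color of $v$ appears more than once in $N_G(u)$). $N_G(v)$ is the neighbourhood and $d_G(v)$ the degree of $v$ in $G$. Asymptotic notation is as $d\to\infty$ with $\alpha,\beta,\varepsilon$ fixed. *)

theory Defs
  imports "HOL-Probability.Probability"
begin

definition simple_graph :: "nat set \<Rightarrow> (nat \<Rightarrow> nat \<Rightarrow> bool) \<Rightarrow> bool" where
  "simple_graph V E \<longleftrightarrow> finite V \<and> (\<forall>u v. E u v \<longrightarrow> u \<in> V \<and> v \<in> V)
     \<and> (\<forall>u v. E u v \<longrightarrow> E v u) \<and> (\<forall>v. \<not> E v v)"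

definition nbhd :: "(nat \<Rightarrow> nat \<Rightarrow> bool) \<Rightarrow> nat \<Rightarrow> nat set" where
  "nbhd E v = {u. E v u}"

definition deg :: "(nat \<Rightarrow> nat \<Rightarrow> bool) \<Rightarrow> nat \<Rightarrow> nat" where
  "deg E v = card (nbhd E v)"

definition min_deg :: "nat set \<Rightarrow> (nat \<Rightarrow> nat \<Rightarrow> bool) \<Rightarrow> nat" where
  "min_deg V E = Min (deg E ` V)"

definition max_deg :: "nat set \<Rightarrow> (nat \<Rightarrow> nat \<Rightarrow> bool) \<Rightarrow> nat" where
  "max_deg V E = Max (deg E ` V)"

definition bipartite_graph :: "nat set \<Rightarrow> nat set \<Rightarrow> (nat \<Rightarrow> nat \<Rightarrow> bool) \<Rightarrow> bool" where
  "bipartite_graph X Y E \<longleftrightarrow> simple_graph (X \<union> Y) E \<and> X \<inter> Y = {}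
     \<and> (\<forall>u v. E u v \<longrightarrow> (u \<in> X \<and> v \<in> Y) \<or> (u \<in> Y \<and> v \<in> X))"

text \<open>Bad(v, chi, G) for a partial colouring chi whose set of coloured vertices is D:
  the number of neighbours u of v such that some v' in N(u), v' \<noteq> v, is coloured with chi v.\<close>
definition Bad :: "(nat \<Rightarrow> nat \<Rightarrow> bool) \<Rightarrow> nat set \<Rightarrow> (nat \<Rightarrow> nat) \<Rightarrow> nat \<Rightarrow> nat" where
  "Bad E D col v = card {u \<in> nbhd E v. \<exists>v' \<in> nbhd E u. v' \<noteq> v \<and> v' \<in> D \<and> col v' = col v}"

text \<open>W_{x,c}: G has adjacency EG, colours live in the graph H (adjacency EH), Y is coloured.\<close>
definition W :: "(nat \<Rightarrow> nat \<Rightarrow> bool) \<Rightarrow> nat set \<Rightarrow> (nat \<Rightarrow> nat \<Rightarrow> bool) \<Rightarrow> real \<Rightarrow> nat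
                 \<Rightarrow> (nat \<Rightarrow> nat) \<Rightarrow> nat \<Rightarrow> nat \<Rightarrow> nat" where
  "W EG Y EH \<alpha> d col x c = card {y \<in> nbhd EG x.
       (\<forall>y' \<in> nbhd EG x. y' \<noteq> y \<longrightarrow> col y' \<noteq> col y)
     \<and> real (Bad EG Y col y) \<le> real d / sqrt \<alpha>
     \<and> EH c (col y)}"

text \<open>Uniform random colouring of Y with colours from VH, independently per vertex.\<close>
definition random_colouring :: "nat set \<Rightarrow> nat set \<Rightarrow> (nat \<Rightarrow> nat) pmf" where
  "random_colouring Y VH = pmf_of_set (Y \<rightarrow>\<^sub>E VH)"

end

theory Submission
  imports Defs
begin

text \<open>Let S = N(x), A = N(c) and \<mu> = |S| |A| / |V(H)|, so that \<mu> \<ge> \<delta> / (2 \<alpha>). A vertex y \<in> S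
  coloured in A is counted by W unless its colour is repeated in S or it has more than d / \<surd>\<alpha>
  bad neighbours, and when its colour is unique in S those bad neighbours see that colour on Y - S.
  Hence W \<le> \<mu> / 2 forces one of three events: at most 3\<mu>/5 vertices of S are coloured in A
  (a Chernoff lower tail); more than \<mu>/20 of them have many bad neighbours seen from Y - S
  (conditioning on the colours of Y - S, the number of such colours per vertex is fixed, and an
  exponential moment over the colours of Y - S counts paths of length two: at most d^2 of them end
  at each vertex while there are \<alpha> d colours); or at least \<mu>/20 vertices of S carry a repeated
  colour from A, which yields \<mu>/60 disjoint monochromatic pairs and a union bound over matchings.
  Each event has probability e^(-\<Omega>(\<mu>)).\<close>

section \<open>Uniform random colourings\<close>

lemma sum_PiE_Un_split:
  fixes F :: "('a \<Rightarrow> 'b) \<Rightarrow> 'c::comm_monoid_add"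
  assumes "A \<inter> B = {}"
  shows "(\<Sum>f\<in>A \<union> B \<rightarrow>\<^sub>E V. F f) =
         (\<Sum>g\<in>B \<rightarrow>\<^sub>E V. \<Sum>h\<in>A \<rightarrow>\<^sub>E V. F (\<lambda>i. if i \<in> A then h i else g i))"
proof -
  have merge_restrict: "(\<lambda>i. if i \<in> A then restrict f A i else restrict f B i) = f"
    if "f \<in> A \<union> B \<rightarrow>\<^sub>E V" for f
    using that by (auto simp: PiE_def extensional_def fun_eq_iff)
  have "(\<Sum>f\<in>A \<union> B \<rightarrow>\<^sub>E V. F f) =
        (\<Sum>(h, g)\<in>(A \<rightarrow>\<^sub>E V) \<times> (B \<rightarrow>\<^sub>E V). F (\<lambda>i. if i \<in> A then h i else g i))"
    by (rule sum.reindex_bij_witness[of _ "\<lambda>(h, g) i. if i \<in> A then h i else g i"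
          "\<lambda>f. (restrict f A, restrict f B)"])
       (use merge_restrict assms in \<open>auto simp: PiE_def extensional_def fun_eq_iff\<close>)
  also have "\<dots> = (\<Sum>h\<in>A \<rightarrow>\<^sub>E V. \<Sum>g\<in>B \<rightarrow>\<^sub>E V. F (\<lambda>i. if i \<in> A then h i else g i))"
    by (simp add: sum.cartesian_product)
  also have "\<dots> = (\<Sum>g\<in>B \<rightarrow>\<^sub>E V. \<Sum>h\<in>A \<rightarrow>\<^sub>E V. F (\<lambda>i. if i \<in> A then h i else g i))"
    by (rule sum.swap)
  finally show ?thesis .
qed

lemma prob_uniform_funcset_le:
  fixes h :: "('a \<Rightarrow> 'b) \<Rightarrow> real"
  assumes "finite Y" "finite V" "V \<noteq> {}"
    and "\<And>f. f \<in> Y \<rightarrow>\<^sub>E V \<Longrightarrow> 0 \<le> h f" and "\<And>f. f \<in> Y \<rightarrow>\<^sub>E V \<Longrightarrow> f \<in> E \<Longrightarrow> 1 \<le> h f"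
  shows "measure_pmf.prob (pmf_of_set (Y \<rightarrow>\<^sub>E V)) E \<le> (\<Sum>f\<in>Y \<rightarrow>\<^sub>E V. h f) / real (card V) ^ card Y"
proof -
  let ?F = "Y \<rightarrow>\<^sub>E V"
  have fin: "finite ?F" and ne: "?F \<noteq> {}"
    using assms(1-3) by (auto simp: finite_PiE PiE_eq_empty_iff)
  have "real (card (?F \<inter> E)) = (\<Sum>f\<in>?F \<inter> E. 1)" by simp
  also have "\<dots> \<le> (\<Sum>f\<in>?F \<inter> E. h f)" using assms(5) by (intro sum_mono) auto
  also have "\<dots> \<le> (\<Sum>f\<in>?F. h f)" using fin assms(4) by (intro sum_mono2) auto
  finally show ?thesis
    using fin ne assms(1) by (simp add: measure_pmf_of_set card_PiE divide_right_mono)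
qed

lemma sum_if_mem_eq:
  assumes "finite V" "A \<subseteq> V"
  shows "(\<Sum>a\<in>V. if a \<in> A then z else 1) = real (card A) * z + (real (card V) - real (card A))"
proof -
  have "(\<Sum>a\<in>V. if a \<in> A then z else 1) = (\<Sum>a\<in>A. z) + (\<Sum>a\<in>V - A. 1)"
    using assms by (simp add: sum.If_cases Int_absorb1 Int_absorb2 Diff_eq[symmetric] Int_commute)
  then show ?thesis
    using assms by (simp add: card_Diff_subset finite_subset of_nat_diff card_mono)
qed

lemma card_mult_add_le_exp:
  fixes a n z :: real
  assumes "0 < n"
  shows "a * z + (n - a) \<le> n * exp (a * (z - 1) / n)"
proof -
  have "a * z + (n - a) = n * (1 + a * (z - 1) / n)" using assms by (simp add: field_simps)
  also have "\<dots> \<le> n * exp (a * (z - 1) / n)"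
    using assms by (intro mult_left_mono exp_ge_add_one_self) auto
  finally show ?thesis .
qed

text \<open>Exponential moments of colour counts have this product form; the sum over colourings
  factorises because the colours are independent.\<close>
lemma sum_PiE_prod_if_mem_le:
  fixes z :: "'a \<Rightarrow> real"
  assumes "finite Y" "finite V" "V \<noteq> {}"
    and "\<And>y. y \<in> Y \<Longrightarrow> A y \<subseteq> V" and "\<And>y. y \<in> Y \<Longrightarrow> 0 \<le> z y"
  shows "(\<Sum>f\<in>Y \<rightarrow>\<^sub>E V. \<Prod>y\<in>Y. if f y \<in> A y then z y else 1)
      \<le> real (card V) ^ card Y * exp (\<Sum>y\<in>Y. card (A y) * (z y - 1) / card V)"
proof -
  let ?n = "real (card V)"
  have n0: "0 < ?n" using assms(2,3) by (simp add: card_gt_0_iff)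
  have "(\<Sum>f\<in>Y \<rightarrow>\<^sub>E V. \<Prod>y\<in>Y. if f y \<in> A y then z y else 1)
      = (\<Prod>y\<in>Y. real (card (A y)) * z y + (?n - card (A y)))"
    using assms(1,2) prod_sum_PiE[of Y "\<lambda>_. V" "\<lambda>y a. if a \<in> A y then z y else 1"]
    by (simp add: assms(4) sum_if_mem_eq)
  also have "\<dots> \<le> (\<Prod>y\<in>Y. ?n * exp (card (A y) * (z y - 1) / ?n))"
  proof (rule prod_mono)
    fix y assume y: "y \<in> Y"
    have "real (card (A y)) \<le> ?n" using card_mono[OF assms(2) assms(4)[OF y]] by simp
    then show "0 \<le> real (card (A y)) * z y + (?n - card (A y)) \<and>
        real (card (A y)) * z y + (?n - card (A y)) \<le> ?n * exp (card (A y) * (z y - 1) / ?n)"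
      using assms(5)[OF y] n0 card_mult_add_le_exp by auto
  qed
  also have "\<dots> = ?n ^ card Y * exp (\<Sum>y\<in>Y. card (A y) * (z y - 1) / ?n)"
    using assms(1) by (simp add: prod.distrib exp_sum)
  finally show ?thesis .
qed

lemma prod_if_eq_power_card:
  "finite Y \<Longrightarrow> (\<Prod>y\<in>Y. if P y then (z::real) else 1) = z ^ card {y\<in>Y. P y}"
  by (simp add: prod.inter_filter[symmetric])

section \<open>Few vertices of S coloured in A\<close>

lemma exp_neg_half_le: "exp (- (1/2) :: real) \<le> 2/3"
proof -
  have "3/2 \<le> exp (1/2 :: real)" using exp_ge_add_one_self[of "1/2 :: real"] by simp
  then show ?thesis by (simp add: exp_minus field_simps)
qed

lemma prob_few_hits_le:
  assumes "finite Y" "S \<subseteq> Y" "finite V" "A \<subseteq> V" "V \<noteq> {}"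
  defines "\<mu> \<equiv> real (card S) * card A / card V"
  shows "measure_pmf.prob (pmf_of_set (Y \<rightarrow>\<^sub>E V)) {f. real (card {y\<in>S. f y \<in> A}) \<le> 3/5 * \<mu>}
      \<le> exp (- \<mu> / 30)"
proof -
  let ?n = "real (card V)"
  let ?hits = "\<lambda>f. real (card {y\<in>S. f y \<in> A})"
  let ?A = "\<lambda>y. if y \<in> S then A else {}"
  have n0: "0 < ?n" using assms(3,5) by (simp add: card_gt_0_iff)
  have exp_hits: "exp (- (1/2) * ?hits f) = (\<Prod>y\<in>Y. if f y \<in> ?A y then exp (- (1/2)) else 1)" for f
  proof -
    have "{y\<in>Y. f y \<in> ?A y} = {y\<in>S. f y \<in> A}" using assms(2) by auto
    then show ?thesis
      using assms(1) by (simp add: prod_if_eq_power_card exp_of_nat_mult[symmetric] mult.commute)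
  qed
  have sum_A: "(\<Sum>y\<in>Y. card (?A y) * (exp (- (1/2)) - 1) / ?n) = \<mu> * (exp (- (1/2)) - 1)"
  proof -
    have "(\<Sum>y\<in>Y. card (?A y) * (exp (- (1/2)) - 1) / ?n) = (\<Sum>y\<in>S. card A * (exp (- (1/2)) - 1) / ?n)"
      using assms(1,2) by (intro sum.mono_neutral_cong_right) auto
    then show ?thesis by (simp add: \<mu>_def)
  qed
  have sum_exp_hits: "(\<Sum>f\<in>Y \<rightarrow>\<^sub>E V. exp (- (1/2) * ?hits f)) \<le> ?n ^ card Y * exp (\<mu> * (exp (- (1/2)) - 1))"
    unfolding exp_hits sum_A[symmetric] using assms(4)
    by (intro sum_PiE_prod_if_mem_le[OF assms(1,3,5)]) auto
  have "measure_pmf.prob (pmf_of_set (Y \<rightarrow>\<^sub>E V)) {f. ?hits f \<le> 3/5 * \<mu>}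
      \<le> (\<Sum>f\<in>Y \<rightarrow>\<^sub>E V. exp (3/10 * \<mu>) * exp (- (1/2) * ?hits f)) / ?n ^ card Y"
    by (rule prob_uniform_funcset_le) (use assms in \<open>auto simp: exp_add[symmetric]\<close>)
  also have "\<dots> \<le> exp (3/10 * \<mu>) * exp (\<mu> * (exp (- (1/2)) - 1))"
    using sum_exp_hits n0 by (simp add: sum_distrib_left[symmetric] field_simps)
  also have "\<dots> \<le> exp (3/10 * \<mu>) * exp (- \<mu> / 3)"
  proof -
    have "0 \<le> \<mu>" by (simp add: \<mu>_def)
    then have "\<mu> * (exp (- (1/2)) - 1) \<le> \<mu> * (2/3 - 1)"
      using exp_neg_half_le by (intro mult_left_mono) auto
    then show ?thesis using n0 by simp
  qed
  also have "\<dots> = exp (- \<mu> / 30)" by (simp add: exp_add[symmetric])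
  finally show ?thesis .
qed

section \<open>Bad neighbours seen from outside S\<close>

lemma sum_card_common_nbhd_le:
  assumes sym: "\<And>u v. E u v \<Longrightarrow> E v u" and fin: "\<And>v. finite (nbhd E v)"
    and deg: "\<And>v. card (nbhd E v) \<le> d" and "finite B"
  shows "(\<Sum>v\<in>B. card (nbhd E y \<inter> nbhd E v)) \<le> d ^ 2"
proof -
  have "(\<Sum>v\<in>B. card (nbhd E y \<inter> nbhd E v)) = (\<Sum>v\<in>B. \<Sum>u\<in>nbhd E y. of_bool (u \<in> nbhd E v))"
    using fin by simp
  also have "\<dots> = (\<Sum>u\<in>nbhd E y. card (B \<inter> {v. u \<in> nbhd E v}))"
    by (subst sum.swap) (simp add: \<open>finite B\<close>)
  also have "\<dots> \<le> (\<Sum>u\<in>nbhd E y. d)"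
  proof (rule sum_mono)
    fix u
    have "B \<inter> {v. u \<in> nbhd E v} \<subseteq> nbhd E u" using sym by (auto simp: nbhd_def)
    then show "card (B \<inter> {v. u \<in> nbhd E v}) \<le> d" using card_mono[OF fin] deg le_trans by blast
  qed
  also have "\<dots> \<le> d ^ 2" using deg[of y] by (simp add: power2_eq_square)
  finally show ?thesis .
qed

text \<open>Unlike Bad, this count of neighbours of y that see colour a on Y - S depends only
  on the colouring of Y - S, which is what allows conditioning on the colours outside S.\<close>
definition Bad_outside :: "(nat \<Rightarrow> nat \<Rightarrow> bool) \<Rightarrow> nat set \<Rightarrow> nat set \<Rightarrow> (nat \<Rightarrow> nat) \<Rightarrow> nat \<Rightarrow> nat \<Rightarrow> nat" where
  "Bad_outside E Y S col y a = card {u \<in> nbhd E y. \<exists>v \<in> nbhd E u. v \<in> Y - S \<and> col v = a}"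

lemma Bad_outside_merge:
  "Bad_outside E Y S (\<lambda>i. if i \<in> S then h i else g i) y a = Bad_outside E Y S g y a"
  unfolding Bad_outside_def by (rule arg_cong[where f = card]) auto

definition codegree_sum :: "(nat \<Rightarrow> nat \<Rightarrow> bool) \<Rightarrow> nat set \<Rightarrow> nat \<Rightarrow> nat" where
  "codegree_sum E S v = (\<Sum>y\<in>S. card (nbhd E y \<inter> nbhd E v))"

lemma Bad_outside_le:
  assumes sym: "\<And>u v. E u v \<Longrightarrow> E v u" and fin: "\<And>v. finite (nbhd E v)" and "finite Y"
  shows "Bad_outside E Y S g y a \<le> (\<Sum>v\<in>{v\<in>Y - S. g v = a}. card (nbhd E y \<inter> nbhd E v))"
proof -
  have "{u \<in> nbhd E y. \<exists>v \<in> nbhd E u. v \<in> Y - S \<and> g v = a}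
      \<subseteq> (\<Union>v\<in>{v\<in>Y - S. g v = a}. nbhd E y \<inter> nbhd E v)"
    using sym by (auto simp: nbhd_def)
  then have "Bad_outside E Y S g y a \<le> card (\<Union>v\<in>{v\<in>Y - S. g v = a}. nbhd E y \<inter> nbhd E v)"
    unfolding Bad_outside_def using fin by (intro card_mono) auto
  also have "\<dots> \<le> (\<Sum>v\<in>{v\<in>Y - S. g v = a}. card (nbhd E y \<inter> nbhd E v))"
    using \<open>finite Y\<close> by (intro card_UN_le) auto
  finally show ?thesis .
qed

lemma sum_Bad_outside_le:
  assumes sym: "\<And>u v. E u v \<Longrightarrow> E v u" and fin: "\<And>v. finite (nbhd E v)"
    and "finite Y" and "finite A"
  shows "(\<Sum>y\<in>S. \<Sum>a\<in>A. Bad_outside E Y S g y a) \<le> (\<Sum>v\<in>{v\<in>Y - S. g v \<in> A}. codegree_sum E S v)"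
proof -
  let ?B = "{v\<in>Y - S. g v \<in> A}"
  have "(\<Sum>a\<in>A. Bad_outside E Y S g y a) \<le> (\<Sum>v\<in>?B. card (nbhd E y \<inter> nbhd E v))" for y
  proof -
    have "(\<Sum>a\<in>A. Bad_outside E Y S g y a)
        \<le> (\<Sum>a\<in>A. \<Sum>v\<in>{v\<in>?B. g v = a}. card (nbhd E y \<inter> nbhd E v))"
    proof (rule sum_mono)
      fix a assume "a \<in> A"
      then have "{v\<in>?B. g v = a} = {v\<in>Y - S. g v = a}" by auto
      then show "Bad_outside E Y S g y a \<le> (\<Sum>v\<in>{v\<in>?B. g v = a}. card (nbhd E y \<inter> nbhd E v))"
        using Bad_outside_le[OF sym fin \<open>finite Y\<close>] by simp
    qed
    also have "\<dots> = (\<Sum>v\<in>?B. card (nbhd E y \<inter> nbhd E v))"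
      using \<open>finite Y\<close> \<open>finite A\<close> by (intro sum.group) auto
    finally show ?thesis .
  qed
  then have "(\<Sum>y\<in>S. \<Sum>a\<in>A. Bad_outside E Y S g y a) \<le> (\<Sum>y\<in>S. \<Sum>v\<in>?B. card (nbhd E y \<inter> nbhd E v))"
    by (rule sum_mono)
  also have "\<dots> = (\<Sum>v\<in>?B. codegree_sum E S v)"
    unfolding codegree_sum_def by (rule sum.swap)
  finally show ?thesis .
qed

lemma codegree_sum_le:
  assumes "\<And>u v. E u v \<Longrightarrow> E v u" "\<And>v. finite (nbhd E v)" "\<And>v. card (nbhd E v) \<le> d" "finite S"
  shows "codegree_sum E S v \<le> d ^ 2"
  unfolding codegree_sum_def using sum_card_common_nbhd_le[OF assms, of v] by (simp add: Int_commute)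

lemma sum_codegree_sum_le:
  assumes "\<And>u v. E u v \<Longrightarrow> E v u" "\<And>v. finite (nbhd E v)" "\<And>v. card (nbhd E v) \<le> d" "finite B"
  shows "(\<Sum>v\<in>B. codegree_sum E S v) \<le> card S * d ^ 2"
proof -
  have "(\<Sum>v\<in>B. codegree_sum E S v) = (\<Sum>y\<in>S. \<Sum>v\<in>B. card (nbhd E y \<inter> nbhd E v))"
    unfolding codegree_sum_def by (rule sum.swap)
  also have "\<dots> \<le> (\<Sum>y\<in>S. d ^ 2)" by (intro sum_mono sum_card_common_nbhd_le[OF assms])
  finally show ?thesis by simp
qed

lemma exp_le_one_plus_twice: "0 \<le> x \<Longrightarrow> x \<le> 1 \<Longrightarrow> exp (x::real) \<le> 1 + 2 * x"
  using exp_bound[of x] by (smt (verit) mult_left_le power2_eq_square)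

lemma sum_exp_bad_hits_le:
  fixes t :: real
  assumes "finite Y" "S \<subseteq> Y" "finite V" "V \<noteq> {}" "A \<subseteq> V"
  shows "(\<Sum>f\<in>Y \<rightarrow>\<^sub>E V. exp (card {y\<in>S. f y \<in> A \<and> t < Bad_outside E Y S f y (f y)}))
    \<le> real (card V) ^ card S * (\<Sum>g\<in>Y - S \<rightarrow>\<^sub>E V.
          exp ((exp 1 - 1) / card V * (\<Sum>y\<in>S. real (card {a\<in>A. t < Bad_outside E Y S g y a}))))"
proof -
  let ?n = "real (card V)"
  let ?A = "\<lambda>g y. {a\<in>A. t < Bad_outside E Y S g y a}"
  have fS: "finite S" using assms(1,2) finite_subset by blast
  have YS: "S \<union> (Y - S) = Y" "S \<inter> (Y - S) = {}" using assms(2) by auto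
  have exp_card: "exp (card {y\<in>S. P y}) = (\<Prod>y\<in>S. if P y then exp 1 else 1)" for P
    using fS by (simp add: prod_if_eq_power_card exp_of_nat_mult[symmetric])
  have "(\<Sum>f\<in>Y \<rightarrow>\<^sub>E V. exp (card {y\<in>S. f y \<in> A \<and> t < Bad_outside E Y S f y (f y)}))
      = (\<Sum>g\<in>Y - S \<rightarrow>\<^sub>E V. \<Sum>h\<in>S \<rightarrow>\<^sub>E V. \<Prod>y\<in>S. if h y \<in> ?A g y then exp 1 else 1)"
    unfolding exp_card sum_PiE_Un_split[OF YS(2), of _ V, unfolded YS(1)]
    by (intro sum.cong refl prod.cong) (auto simp: Bad_outside_merge)
  also have "\<dots> \<le> (\<Sum>g\<in>Y - S \<rightarrow>\<^sub>E V. ?n ^ card S * exp (\<Sum>y\<in>S. card (?A g y) * (exp 1 - 1) / ?n))"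
    using assms(5) by (intro sum_mono sum_PiE_prod_if_mem_le[OF fS assms(3,4)]) auto
  finally show ?thesis
    by (simp add: sum_distrib_left sum_divide_distrib mult_ac)
qed

lemma card_bad_colours_sum_le:
  fixes t :: real
  assumes "0 < t" "\<And>u v. E u v \<Longrightarrow> E v u" "\<And>v. finite (nbhd E v)" "finite Y" "finite A"
  shows "t * (\<Sum>y\<in>S. real (card {a\<in>A. t < Bad_outside E Y S g y a}))
      \<le> (\<Sum>v\<in>{v\<in>Y - S. g v \<in> A}. codegree_sum E S v)"
proof -
  have "t * card {a\<in>A. t < Bad_outside E Y S g y a} \<le> (\<Sum>a\<in>A. Bad_outside E Y S g y a)" for y
  proof -
    have "t * card {a\<in>A. t < Bad_outside E Y S g y a} = (\<Sum>a\<in>{a\<in>A. t < Bad_outside E Y S g y a}. t)"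
      by simp
    also have "\<dots> \<le> (\<Sum>a\<in>{a\<in>A. t < Bad_outside E Y S g y a}. real (Bad_outside E Y S g y a))"
      by (intro sum_mono) auto
    also have "\<dots> \<le> (\<Sum>a\<in>A. real (Bad_outside E Y S g y a))"
      using assms(5) by (intro sum_mono2) auto
    finally show ?thesis by simp
  qed
  then have "t * (\<Sum>y\<in>S. real (card {a\<in>A. t < Bad_outside E Y S g y a}))
      \<le> (\<Sum>y\<in>S. real (\<Sum>a\<in>A. Bad_outside E Y S g y a))"
    by (simp add: sum_distrib_left sum_mono)
  also have "\<dots> \<le> (\<Sum>v\<in>{v\<in>Y - S. g v \<in> A}. codegree_sum E S v)"
    using sum_Bad_outside_le[OF assms(2-5)] by (simp flip: of_nat_sum)
  finally show ?thesis .
qed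

lemma sum_exp_codegree_sum_le:
  fixes s :: real
  assumes "finite B" "finite V" "V \<noteq> {}" "A \<subseteq> V" "0 \<le> s" "s * real d ^ 2 \<le> 1"
    and sym: "\<And>u v. E u v \<Longrightarrow> E v u" and fin: "\<And>v. finite (nbhd E v)"
    and deg: "\<And>v. card (nbhd E v) \<le> d" and "finite S"
  shows "(\<Sum>g\<in>B \<rightarrow>\<^sub>E V. exp (s * (\<Sum>v\<in>{v\<in>B. g v \<in> A}. codegree_sum E S v)))
      \<le> real (card V) ^ card B * exp (2 * s * card A * card S * real d ^ 2 / card V)"
proof -
  let ?n = "real (card V)"
  let ?w = "\<lambda>v. real (codegree_sum E S v)"
  have n0: "0 < ?n" using assms(2,3) by (simp add: card_gt_0_iff)
  have exp_sum_eq: "exp (s * (\<Sum>v\<in>{v\<in>B. g v \<in> A}. codegree_sum E S v))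
      = (\<Prod>v\<in>B. if g v \<in> A then exp (s * ?w v) else 1)" for g
    using assms(1) by (simp add: sum_distrib_left exp_sum prod.inter_filter)
  have "(\<Sum>g\<in>B \<rightarrow>\<^sub>E V. \<Prod>v\<in>B. if g v \<in> A then exp (s * ?w v) else 1)
      \<le> ?n ^ card B * exp (\<Sum>v\<in>B. card A * (exp (s * ?w v) - 1) / ?n)"
    using assms(4) by (intro sum_PiE_prod_if_mem_le[OF assms(1-3)]) auto
  also have "\<dots> \<le> ?n ^ card B * exp (\<Sum>v\<in>B. card A * (2 * s * ?w v) / ?n)"
  proof -
    have "exp (s * ?w v) - 1 \<le> 2 * s * ?w v" for v
    proof -
      have "?w v \<le> real d ^ 2"
        using codegree_sum_le[OF sym fin deg \<open>finite S\<close>, of v] by (simp flip: of_nat_power)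
      then have "s * ?w v \<le> s * real d ^ 2" using assms(5) by (rule mult_left_mono)
      then have "s * ?w v \<le> 1" using assms(6) by linarith
      then show ?thesis using exp_le_one_plus_twice[of "s * ?w v"] assms(5) by simp
    qed
    then have "card A * (exp (s * ?w v) - 1) / ?n \<le> card A * (2 * s * ?w v) / ?n" for v
      using n0 by (intro divide_right_mono mult_left_mono) auto
    then show ?thesis by (intro mult_left_mono exp_le_cancel_iff[THEN iffD2] sum_mono) auto
  qed
  also have "\<dots> \<le> ?n ^ card B * exp (2 * s * card A * card S * real d ^ 2 / ?n)"
  proof -
    have "(\<Sum>v\<in>B. card A * (2 * s * ?w v) / ?n) = 2 * s * card A / ?n * (\<Sum>v\<in>B. ?w v)"
      by (simp add: sum_distrib_left sum_divide_distrib mult_ac)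
    also have "\<dots> \<le> 2 * s * card A / ?n * (card S * real d ^ 2)"
      using of_nat_mono[OF sum_codegree_sum_le[OF sym fin deg assms(1), of S]] assms(5) n0
      by (intro mult_left_mono) auto
    finally have "(\<Sum>v\<in>B. card A * (2 * s * ?w v) / ?n) \<le> 2 * s * card A * card S * real d ^ 2 / ?n"
      by (simp add: mult_ac)
    then show ?thesis by (intro mult_left_mono) auto
  qed
  finally show ?thesis by (simp only: exp_sum_eq)
qed

lemma sum_exp_many_bad_hits_le:
  fixes t :: real
  assumes "finite Y" "S \<subseteq> Y" "finite V" "V \<noteq> {}" "A \<subseteq> V" "0 < t"
    and sym: "\<And>u v. E u v \<Longrightarrow> E v u" and fin: "\<And>v. finite (nbhd E v)"
    and deg: "\<And>v. card (nbhd E v) \<le> d"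
    and small: "(exp 1 - 1) * real d ^ 2 \<le> t * card V"
  shows "(\<Sum>f\<in>Y \<rightarrow>\<^sub>E V. exp (card {y\<in>S. f y \<in> A \<and> t < Bad_outside E Y S f y (f y)}))
    \<le> real (card V) ^ card Y * exp (2 * (exp 1 - 1) * card A * card S * real d ^ 2 / (t * real (card V) ^ 2))"
proof -
  let ?n = "real (card V)"
  let ?B = "\<lambda>g. {v\<in>Y - S. g v \<in> A}"
  define s where "s = (exp 1 - 1) / (t * ?n)"
  have fS: "finite S" and fA: "finite A" using assms(1-3,5) finite_subset by blast+
  have n0: "0 < ?n" using assms(3,4) by (simp add: card_gt_0_iff)
  have s0: "0 \<le> s" using n0 assms(6) by (simp add: s_def)
  have s1: "s * real d ^ 2 \<le> 1" using small n0 assms(6) by (simp add: s_def field_simps)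
  have conditioned: "(exp 1 - 1) / ?n * (\<Sum>y\<in>S. real (card {a\<in>A. t < Bad_outside E Y S g y a}))
      \<le> s * (\<Sum>v\<in>?B g. codegree_sum E S v)" for g
  proof -
    let ?X = "\<Sum>y\<in>S. real (card {a\<in>A. t < Bad_outside E Y S g y a})"
    have "t * ?X \<le> (\<Sum>v\<in>?B g. codegree_sum E S v)"
      by (rule card_bad_colours_sum_le[OF assms(6) sym fin assms(1) fA])
    moreover have "(exp 1 - 1) / ?n * ?X = s * (t * ?X)" using assms(6) by (simp add: s_def)
    ultimately show ?thesis using mult_left_mono s0 by simp
  qed
  have "(\<Sum>f\<in>Y \<rightarrow>\<^sub>E V. exp (card {y\<in>S. f y \<in> A \<and> t < Bad_outside E Y S f y (f y)}))
      \<le> ?n ^ card S * (\<Sum>g\<in>Y - S \<rightarrow>\<^sub>E V.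
        exp ((exp 1 - 1) / ?n * (\<Sum>y\<in>S. real (card {a\<in>A. t < Bad_outside E Y S g y a}))))"
    by (rule sum_exp_bad_hits_le[OF assms(1-5)])
  also have "\<dots> \<le> ?n ^ card S * (\<Sum>g\<in>Y - S \<rightarrow>\<^sub>E V. exp (s * (\<Sum>v\<in>?B g. codegree_sum E S v)))"
    using conditioned by (intro mult_left_mono sum_mono) auto
  also have "\<dots> \<le> ?n ^ card S * (?n ^ card (Y - S) * exp (2 * s * card A * card S * real d ^ 2 / ?n))"
    by (intro mult_left_mono sum_exp_codegree_sum_le[OF _ assms(3-5) s0 s1 sym fin deg fS])
       (use assms(1) in auto)
  also have "\<dots> = ?n ^ card Y * exp (2 * (exp 1 - 1) * card A * card S * real d ^ 2 / (t * ?n ^ 2))"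
  proof -
    have "card Y = card S + card (Y - S)" using assms(1,2) fS by (simp add: card_Diff_subset card_mono)
    then show ?thesis by (simp add: power_add s_def power2_eq_square field_simps)
  qed
  finally show ?thesis .
qed

lemma prob_many_bad_hits_le:
  fixes t r :: real
  assumes "finite Y" "S \<subseteq> Y" "finite V" "V \<noteq> {}" "A \<subseteq> V" "0 < t"
    and "\<And>u v. E u v \<Longrightarrow> E v u" "\<And>v. finite (nbhd E v)" "\<And>v. card (nbhd E v) \<le> d"
    and "(exp 1 - 1) * real d ^ 2 \<le> t * card V"
  shows "measure_pmf.prob (pmf_of_set (Y \<rightarrow>\<^sub>E V))
      {f. r < card {y\<in>S. f y \<in> A \<and> t < Bad_outside E Y S f y (f y)}}
    \<le> exp (2 * (exp 1 - 1) * card A * card S * real d ^ 2 / (t * real (card V) ^ 2) - r)"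
proof -
  let ?n = "real (card V)"
  let ?U = "\<lambda>f. real (card {y\<in>S. f y \<in> A \<and> t < Bad_outside E Y S f y (f y)})"
  have n0: "0 < ?n" using assms(3,4) by (simp add: card_gt_0_iff)
  have "measure_pmf.prob (pmf_of_set (Y \<rightarrow>\<^sub>E V)) {f. r < ?U f}
      \<le> (\<Sum>f\<in>Y \<rightarrow>\<^sub>E V. exp (- r) * exp (?U f)) / ?n ^ card Y"
    by (rule prob_uniform_funcset_le) (use assms in \<open>auto simp: exp_add[symmetric]\<close>)
  also have "\<dots> \<le> exp (- r) * exp (2 * (exp 1 - 1) * card A * card S * real d ^ 2 / (t * ?n ^ 2))"
    using sum_exp_many_bad_hits_le[OF assms] n0 by (simp add: sum_distrib_left[symmetric] field_simps)
  finally show ?thesis by (simp add: exp_add[symmetric])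
qed

section \<open>Repeated colours\<close>

definition repeated_hits :: "('a \<Rightarrow> 'b) \<Rightarrow> 'a set \<Rightarrow> 'b set \<Rightarrow> 'a set" where
  "repeated_hits col S A = {y\<in>S. col y \<in> A \<and> (\<exists>y'\<in>S. y' \<noteq> y \<and> col y' = col y)}"

lemma finite_repeated_hits: "finite S \<Longrightarrow> finite (repeated_hits col S A)"
  by (simp add: repeated_hits_def)

definition pair_matchings :: "'a set \<Rightarrow> nat \<Rightarrow> ('a \<times> 'a) set set" where
  "pair_matchings S q = {M. M \<subseteq> S \<times> S \<and> card M = q \<and> inj_on fst M \<and> inj_on snd M \<and> fst ` M \<inter> snd ` M = {}}"

definition monochromatic_in :: "('a \<times> 'a) set \<Rightarrow> 'b set \<Rightarrow> ('a \<Rightarrow> 'b) set" where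
  "monochromatic_in M A = {col. \<forall>(a, b)\<in>M. col a = col b \<and> col a \<in> A}"

text \<open>Removing a monochromatic pair destroys at most three repeated hits: the pair itself and a
  possible third vertex of the same colour that becomes unique.\<close>
lemma card_repeated_hits_Diff_pair_le:
  assumes "finite S" "y \<in> S" "y' \<in> S" "y \<noteq> y'" "col y = col y'"
  shows "card (repeated_hits col S A) \<le> card (repeated_hits col (S - {y, y'}) A) + 3"
proof -
  define S' where "S' = S - {y, y'}"
  define L where "L = {z\<in>S'. col z = col y \<and> (\<forall>z'\<in>S'. z' \<noteq> z \<longrightarrow> col z' \<noteq> col y)}"
  have "repeated_hits col S A \<subseteq> repeated_hits col S' A \<union> {y, y'} \<union> L"
  proof
    fix z assume z: "z \<in> repeated_hits col S A"
    show "z \<in> repeated_hits col S' A \<union> {y, y'} \<union> L"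
    proof (cases "z \<in> {y, y'} \<or> z \<in> repeated_hits col S' A")
      case False
      then have zS': "z \<in> S'" using z by (auto simp: repeated_hits_def S'_def)
      from z obtain w where w: "w \<in> S" "w \<noteq> z" "col w = col z" and "col z \<in> A"
        by (auto simp: repeated_hits_def)
      then have unique: "\<forall>z'\<in>S'. z' \<noteq> z \<longrightarrow> col z' \<noteq> col z"
        using False zS' by (auto simp: repeated_hits_def)
      then have "w \<in> {y, y'}" using w by (auto simp: S'_def)
      then have "col z = col y" using w assms(5) by auto
      then show ?thesis using zS' unique by (auto simp: L_def)
    qed auto
  qed
  moreover have "finite (repeated_hits col S' A)" "finite L"
    using assms(1) by (auto simp: repeated_hits_def S'_def L_def)
  moreover have "card L \<le> 1"
    using card_le_Suc0_iff_eq[OF \<open>finite L\<close>] by (auto simp: L_def)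
  ultimately have "card (repeated_hits col S A) \<le> card (repeated_hits col S' A \<union> {y, y'} \<union> L)"
    by (intro card_mono) auto
  also have "\<dots> \<le> card (repeated_hits col S' A) + card {y, y'} + card L"
    by (metis card_Un_le add_le_mono le_refl order_trans)
  also have "\<dots> \<le> card (repeated_hits col S' A) + 3"
    using \<open>card L \<le> 1\<close> by (simp add: card_insert_if)
  finally show ?thesis by (simp add: S'_def)
qed

lemma repeated_hits_imp_matching:
  "finite S \<Longrightarrow> 3 * q \<le> card (repeated_hits col S A) \<Longrightarrow> \<exists>M\<in>pair_matchings S q. col \<in> monochromatic_in M A"
proof (induction q arbitrary: S)
  case 0
  then show ?case by (auto simp: pair_matchings_def monochromatic_in_def intro!: bexI[of _ "{}"])
next
  case (Suc q)
  then have "repeated_hits col S A \<noteq> {}" by auto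
  then obtain y where y: "y \<in> S" "col y \<in> A" and "\<exists>y'\<in>S. y' \<noteq> y \<and> col y' = col y"
    by (auto simp: repeated_hits_def)
  then obtain y' where y': "y' \<in> S" "y' \<noteq> y" "col y' = col y" by blast
  define S' where "S' = S - {y, y'}"
  have "card (repeated_hits col S A) \<le> card (repeated_hits col S' A) + 3"
    unfolding S'_def using Suc.prems y y' by (intro card_repeated_hits_Diff_pair_le) auto
  then have "3 * q \<le> card (repeated_hits col S' A)" using Suc.prems(2) by simp
  then obtain M' where M': "M' \<in> pair_matchings S' q" "col \<in> monochromatic_in M' A"
    using Suc.IH[of S'] Suc.prems(1) by (auto simp: S'_def)
  have sub: "M' \<subseteq> S' \<times> S'" using M'(1) by (simp add: pair_matchings_def)
  then have fM': "finite M'" by (rule finite_subset) (use Suc.prems(1) in \<open>simp add: S'_def\<close>)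
  have "(y, y') \<notin> M'" "fst ` M' \<subseteq> S'" "snd ` M' \<subseteq> S'" using sub by (auto simp: S'_def)
  then have "insert (y, y') M' \<in> pair_matchings S (Suc q)"
    using M'(1) sub fM' y y' by (auto simp: pair_matchings_def S'_def inj_on_def)
  moreover have "col \<in> monochromatic_in (insert (y, y') M') A"
    using M'(2) y y' by (auto simp: monochromatic_in_def)
  ultimately show ?case by blast
qed

lemma inj_on_restrict_monochromatic_in:
  assumes "fst ` M \<subseteq> Y" "fst ` M \<inter> snd ` M = {}"
  shows "inj_on (\<lambda>f. restrict f (Y - snd ` M)) ((Y \<rightarrow>\<^sub>E V) \<inter> monochromatic_in M A)"
proof (rule inj_onI, rule ext)
  fix f f' i
  assume f: "f \<in> (Y \<rightarrow>\<^sub>E V) \<inter> monochromatic_in M A" and f': "f' \<in> (Y \<rightarrow>\<^sub>E V) \<inter> monochromatic_in M A"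
    and eq: "restrict f (Y - snd ` M) = restrict f' (Y - snd ` M)"
  show "f i = f' i"
  proof (cases "i \<in> snd ` M")
    case True
    then obtain a where a: "(a, i) \<in> M" by force
    then have "a \<in> Y - snd ` M" using assms by force
    then have "f a = f' a" using eq by (metis restrict_apply')
    moreover have "f a = f i" "f' a = f' i"
      using f f' a unfolding monochromatic_in_def by (blast dest: case_prodD)+
    ultimately show ?thesis by simp
  next
    case False
    show ?thesis
    proof (cases "i \<in> Y")
      case True
      then show ?thesis using False eq by (metis Diff_iff restrict_apply')
    qed (use f f' in \<open>auto simp: PiE_def extensional_def\<close>)
  qed
qed

lemma restrict_monochromatic_in_PiE:
  assumes "f \<in> (Y \<rightarrow>\<^sub>E V) \<inter> monochromatic_in M A"
  shows "restrict f (Y - snd ` M) \<in> PiE (Y - snd ` M) (\<lambda>i. if i \<in> fst ` M then A else V)"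
proof -
  have "f i \<in> A" if "i \<in> fst ` M" for i
  proof -
    from that obtain b where "(i, b) \<in> M" by force
    with assms show ?thesis unfolding monochromatic_in_def by (blast dest: case_prodD)
  qed
  then show ?thesis using assms by (auto simp: PiE_iff)
qed

text \<open>Each of the q pairs determines the colour of its second vertex and confines that of its first
  vertex to A.\<close>
lemma card_monochromatic_in_le:
  assumes "finite Y" "S \<subseteq> Y" "finite V" "A \<subseteq> V" and M: "M \<in> pair_matchings S q"
  shows "card ((Y \<rightarrow>\<^sub>E V) \<inter> monochromatic_in M A) * card V ^ (2 * q) \<le> card A ^ q * card V ^ card Y"
proof -
  define T where "T = snd ` M"
  define F where "F = fst ` M"
  let ?C = "(Y \<rightarrow>\<^sub>E V) \<inter> monochromatic_in M A"
  let ?R = "PiE (Y - T) (\<lambda>i. if i \<in> F then A else V)"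
  have MS: "M \<subseteq> S \<times> S" and "card M = q" "inj_on fst M" "inj_on snd M" and FT: "F \<inter> T = {}"
    using M by (auto simp: pair_matchings_def F_def T_def)
  then have cT: "card T = q" and cF: "card F = q" by (simp_all add: T_def F_def card_image)
  have TY: "T \<subseteq> Y" and FY: "F \<subseteq> Y" using MS assms(2) by (auto simp: T_def F_def)
  have FYT: "F \<subseteq> Y - T" using FY FT by auto
  have cY: "card (Y - T - F) + 2 * q = card Y"
  proof -
    have "card (Y - T) = card Y - q" using assms(1) TY cT by (simp add: card_Diff_subset finite_subset)
    moreover have "card (Y - T - F) = card (Y - T) - q" using assms(1) FYT cF by (simp add: card_Diff_subset finite_subset)
    moreover have "q \<le> card (Y - T)" using assms(1) FYT cF by (metis card_mono finite_Diff)
    moreover have "q \<le> card Y" using assms(1) TY cT by (metis card_mono)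
    ultimately show ?thesis by linarith
  qed
  have "inj_on (\<lambda>f. restrict f (Y - T)) ?C"
    unfolding T_def using FY FT by (intro inj_on_restrict_monochromatic_in) (auto simp: F_def T_def)
  then have "card ?C = card ((\<lambda>f. restrict f (Y - T)) ` ?C)" by (simp add: card_image)
  also have "\<dots> \<le> card ?R"
  proof (rule card_mono)
    have "finite A" using assms(3,4) by (rule finite_subset[rotated])
    then show "finite ?R" using assms(1,3) by (intro finite_PiE) auto
    show "(\<lambda>f. restrict f (Y - T)) ` ?C \<subseteq> ?R"
    proof (rule image_subsetI)
      fix f assume "f \<in> ?C"
      then show "restrict f (Y - T) \<in> ?R" unfolding T_def F_def by (rule restrict_monochromatic_in_PiE)
    qed
  qed
  also have "\<dots> = card A ^ q * card V ^ card (Y - T - F)"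
  proof -
    have "(Y - T) \<inter> {i. i \<in> F} = F" "(Y - T) \<inter> - {i. i \<in> F} = Y - T - F" using FYT by auto
    then show ?thesis
      using prod.If_cases[of "Y - T" "\<lambda>i. i \<in> F" "\<lambda>_. card A" "\<lambda>_. card V"] assms(1) cF
      by (simp add: card_PiE if_distrib[of card])
  qed
  finally have "card ?C * card V ^ (2 * q) \<le> card A ^ q * (card V ^ card (Y - T - F) * card V ^ (2 * q))"
    by (simp add: mult_right_mono)
  then show ?thesis by (simp add: power_add[symmetric] cY)
qed

lemma card_pair_matchings_le:
  assumes "finite S"
  shows "card (pair_matchings S q) \<le> (card S * card S) choose q"
proof -
  have "pair_matchings S q \<subseteq> {M. M \<subseteq> S \<times> S \<and> card M = q}" by (auto simp: pair_matchings_def)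
  then have "card (pair_matchings S q) \<le> card {M. M \<subseteq> S \<times> S \<and> card M = q}"
    using assms by (intro card_mono) (auto intro: finite_subset[of _ "Pow (S \<times> S)"])
  also have "\<dots> = card (S \<times> S) choose q" using assms by (simp add: n_subsets)
  finally show ?thesis by (simp add: card_cartesian_product)
qed

lemma prob_repeated_hits_le:
  assumes "finite Y" "S \<subseteq> Y" "finite V" "A \<subseteq> V" "V \<noteq> {}"
  shows "measure_pmf.prob (pmf_of_set (Y \<rightarrow>\<^sub>E V)) {f. 3 * q \<le> card (repeated_hits f S A)}
     \<le> real ((card S * card S) choose q) * real (card A) ^ q / real (card V) ^ (2 * q)"
proof -
  let ?F = "Y \<rightarrow>\<^sub>E V"
  let ?E = "{f. 3 * q \<le> card (repeated_hits f S A)}"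
  let ?n = "real (card V)"
  have fS: "finite S" using assms(1,2) finite_subset by blast
  have fF: "finite ?F" using assms(1,3) by (simp add: finite_PiE)
  have n0: "0 < ?n" using assms(3,5) by (simp add: card_gt_0_iff)
  have fMs: "finite (pair_matchings S q)"
    by (rule finite_subset[of _ "Pow (S \<times> S)"]) (use fS in \<open>auto simp: pair_matchings_def\<close>)
  have "?F \<inter> ?E \<subseteq> (\<Union>M\<in>pair_matchings S q. ?F \<inter> monochromatic_in M A)"
    using repeated_hits_imp_matching[OF fS] by blast
  then have "card (?F \<inter> ?E) \<le> card (\<Union>M\<in>pair_matchings S q. ?F \<inter> monochromatic_in M A)"
    using fF fMs by (intro card_mono) auto
  also have "\<dots> \<le> (\<Sum>M\<in>pair_matchings S q. card (?F \<inter> monochromatic_in M A))"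
    by (rule card_UN_le[OF fMs])
  finally have "card (?F \<inter> ?E) * card V ^ (2 * q)
      \<le> (\<Sum>M\<in>pair_matchings S q. card (?F \<inter> monochromatic_in M A) * card V ^ (2 * q))"
    by (simp add: sum_distrib_right[symmetric])
  also have "\<dots> \<le> (\<Sum>M\<in>pair_matchings S q. card A ^ q * card V ^ card Y)"
    by (intro sum_mono card_monochromatic_in_le[OF assms(1-4)])
  also have "\<dots> \<le> ((card S * card S) choose q) * card A ^ q * card V ^ card Y"
    using card_pair_matchings_le[OF fS] by (simp add: mult.assoc)
  finally have "real (card (?F \<inter> ?E)) * ?n ^ (2 * q) \<le> real ((card S * card S) choose q) * card A ^ q * ?n ^ card Y"
    unfolding of_nat_mult[symmetric] of_nat_power[symmetric] of_nat_le_iff .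
  then have "real (card (?F \<inter> ?E)) / ?n ^ card Y \<le> real ((card S * card S) choose q) * card A ^ q / ?n ^ (2 * q)"
    using n0 by (simp add: divide_le_eq le_divide_eq mult.commute)
  moreover have "measure_pmf.prob (pmf_of_set ?F) ?E = real (card (?F \<inter> ?E)) / ?n ^ card Y"
    using fF assms(1,5) by (simp add: measure_pmf_of_set PiE_eq_empty_iff card_PiE)
  ultimately show ?thesis by simp
qed

lemma power_le_exp_mult_fact: "real q ^ q \<le> exp (real q) * fact q"
proof -
  have "(\<lambda>n. real q ^ n /\<^sub>R fact n) sums exp (real q)" by (rule exp_converges)
  then have "real q ^ q / fact q \<le> exp (real q)"
    using sum_le_suminf[of "\<lambda>n. real q ^ n /\<^sub>R fact n" "{q}"] by (simp add: sums_iff divide_inverse mult.commute)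
  then show ?thesis by (simp add: divide_le_eq mult.commute)
qed

lemma exp_one_le: "exp (1::real) \<le> 272/100"
  using e_less_272 by simp

lemma inverse_three_le_exp_neg_one: "1/3 \<le> exp (- 1::real)"
  using exp_one_le by (simp add: exp_minus field_simps)

text \<open>The union bound over matchings: with x = k^2 a / n^2, the bound is at most (e x / q)^q, and
  x \<le> \<mu> / \<alpha> because k \<le> n / \<alpha>.\<close>
lemma choose_square_bound_le_exp:
  fixes k q :: nat and a n \<mu> \<alpha> :: real
  assumes "0 < n" "0 \<le> a" "\<mu> = real k * a / n" "real k * \<alpha> \<le> n"
    and "1 \<le> q" "\<mu> / 120 \<le> real q" "25600 \<le> \<alpha>" "0 < \<mu>"
  shows "real ((k * k) choose q) * a ^ q / n ^ (2 * q) \<le> exp (- \<mu> / 120)"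
proof -
  define x where "x = real k * real k * a / n ^ 2"
  have x0: "0 \<le> x" using assms(1,2) by (simp add: x_def)
  have "real ((k * k) choose q) * a ^ q / n ^ (2 * q) \<le> real (k * k) ^ q / fact q * a ^ q / n ^ (2 * q)"
  proof -
    have "real ((k * k) choose q) * fact q \<le> real (k * k) ^ q"
      using binomial_fact_pow[of "k * k" q] by (metis of_nat_fact of_nat_le_iff of_nat_mult of_nat_power)
    then have "real ((k * k) choose q) \<le> real (k * k) ^ q / fact q" by (simp add: field_simps)
    then show ?thesis using assms(1,2) by (intro divide_right_mono mult_right_mono) auto
  qed
  also have "\<dots> = x ^ q / fact q"
    by (simp add: x_def power_mult_distrib power_divide power_mult[symmetric] mult.commute)
  also have "\<dots> \<le> x ^ q * (exp (real q) / real q ^ q)"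
  proof -
    have "1 / fact q \<le> exp (real q) / real q ^ q"
      using power_le_exp_mult_fact[of q] assms(5) by (simp add: field_simps)
    then show ?thesis using x0 by (simp add: divide_inverse mult_left_mono)
  qed
  also have "\<dots> = (x * exp 1 / real q) ^ q"
    by (simp add: power_mult_distrib power_divide exp_of_nat_mult[symmetric] mult.commute)
  also have "\<dots> \<le> exp (- 1) ^ q"
  proof (rule power_mono)
    have "x = \<mu> * (real k / n)" using assms(1,3) by (simp add: x_def power2_eq_square field_simps)
    also have "\<dots> \<le> \<mu> * (1 / \<alpha>)"
      using assms(1,4,7,8) by (intro mult_left_mono) (auto simp: field_simps)
    finally have "x * exp 1 / real q \<le> (\<mu> / \<alpha>) * exp 1 / (\<mu> / 120)"
      using assms(5-8) by (intro frac_le mult_right_mono) auto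
    also have "\<dots> = 120 * exp 1 / \<alpha>" using assms(7,8) by (simp add: field_simps)
    also have "\<dots> \<le> 120 * (272/100) / 25600" using exp_one_le assms(7) by (intro frac_le) auto
    also have "\<dots> \<le> exp (- 1)" using inverse_three_le_exp_neg_one by simp
    finally show "x * exp 1 / real q \<le> exp (- 1)" .
  qed (use x0 in simp)
  also have "\<dots> = exp (- real q)" by (simp add: exp_of_nat_mult[symmetric])
  also have "\<dots> \<le> exp (- \<mu> / 120)" using assms(6) by simp
  finally show ?thesis .
qed

section \<open>The count W\<close>

lemma Bad_le_Bad_outside:
  assumes "\<And>v. finite (nbhd E v)" and "\<forall>y'\<in>S. y' \<noteq> y \<longrightarrow> col y' \<noteq> col y"
  shows "Bad E Y col y \<le> Bad_outside E Y S col y (col y)"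
  unfolding Bad_def Bad_outside_def using assms by (intro card_mono) auto

lemma hits_le_W_add:
  fixes EG EH :: "nat \<Rightarrow> nat \<Rightarrow> bool" and x c :: nat
  assumes "\<And>v. finite (nbhd EG v)"
  defines "S \<equiv> nbhd EG x" and "A \<equiv> nbhd EH c"
  shows "card {y\<in>S. col y \<in> A} \<le> W EG Y EH \<alpha> d col x c
      + card {y\<in>S. col y \<in> A \<and> real d / sqrt \<alpha> < Bad_outside EG Y S col y (col y)}
      + card (repeated_hits col S A)"
proof -
  let ?good = "{y\<in>S. (\<forall>y'\<in>S. y' \<noteq> y \<longrightarrow> col y' \<noteq> col y)
      \<and> real (Bad EG Y col y) \<le> real d / sqrt \<alpha> \<and> EH c (col y)}"
  let ?bad = "{y\<in>S. col y \<in> A \<and> real d / sqrt \<alpha> < Bad_outside EG Y S col y (col y)}"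
  have fS: "finite S" using assms(1) by (simp add: S_def)
  have "{y\<in>S. col y \<in> A} \<subseteq> ?good \<union> ?bad \<union> repeated_hits col S A"
  proof
    fix y assume y: "y \<in> {y\<in>S. col y \<in> A}"
    show "y \<in> ?good \<union> ?bad \<union> repeated_hits col S A"
    proof (cases "\<forall>y'\<in>S. y' \<noteq> y \<longrightarrow> col y' \<noteq> col y")
      case unique: True
      show ?thesis
      proof (cases "real (Bad EG Y col y) \<le> real d / sqrt \<alpha>")
        case True
        then have "y \<in> ?good" using unique y by (simp add: A_def nbhd_def)
        then show ?thesis by blast
      next
        case False
        moreover have "Bad EG Y col y \<le> Bad_outside EG Y S col y (col y)"
          using unique by (rule Bad_le_Bad_outside[OF assms(1)])
        ultimately have "y \<in> ?bad" using y by simp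
        then show ?thesis by blast
      qed
    next
      case False
      then have "y \<in> repeated_hits col S A" using y unfolding repeated_hits_def by blast
      then show ?thesis by blast
    qed
  qed
  then have "card {y\<in>S. col y \<in> A} \<le> card (?good \<union> ?bad \<union> repeated_hits col S A)"
    using fS finite_repeated_hits by (intro card_mono) auto
  also have "\<dots> \<le> card ?good + card ?bad + card (repeated_hits col S A)"
    using card_Un_le[of "?good \<union> ?bad" "repeated_hits col S A"] card_Un_le[of ?good ?bad] by linarith
  also have "card ?good = W EG Y EH \<alpha> d col x c" by (simp add: W_def S_def)
  finally show ?thesis .
qed

lemma W_le_half_mean_subset:
  fixes EG EH :: "nat \<Rightarrow> nat \<Rightarrow> bool" and x c :: nat and \<mu> :: real
  assumes "\<And>v. finite (nbhd EG v)" "real (3 * q) \<le> \<mu> / 20"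
  defines "S \<equiv> nbhd EG x" and "A \<equiv> nbhd EH c"
  shows "{col. real (W EG Y EH \<alpha> d col x c) \<le> \<mu> / 2}
    \<subseteq> {col. real (card {y\<in>S. col y \<in> A}) \<le> 3/5 * \<mu>}
      \<union> {col. \<mu> / 20 < card {y\<in>S. col y \<in> A \<and> real d / sqrt \<alpha> < Bad_outside EG Y S col y (col y)}}
      \<union> {col. 3 * q \<le> card (repeated_hits col S A)}"
proof
  fix col assume "col \<in> {col. real (W EG Y EH \<alpha> d col x c) \<le> \<mu> / 2}"
  moreover have "card {y\<in>S. col y \<in> A} \<le> W EG Y EH \<alpha> d col x c
      + card {y\<in>S. col y \<in> A \<and> real d / sqrt \<alpha> < Bad_outside EG Y S col y (col y)}
      + card (repeated_hits col S A)"
    unfolding S_def A_def by (rule hits_le_W_add[OF assms(1)])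
  ultimately show "col \<in> {col. real (card {y\<in>S. col y \<in> A}) \<le> 3/5 * \<mu>}
      \<union> {col. \<mu> / 20 < card {y\<in>S. col y \<in> A \<and> real d / sqrt \<alpha> < Bad_outside EG Y S col y (col y)}}
      \<union> {col. 3 * q \<le> card (repeated_hits col S A)}"
    using assms(2) by (auto simp flip: of_nat_add)
qed

section \<open>Combining the three tails\<close>

lemma bad_hits_exponent_le:
  fixes \<alpha> d n a k \<mu> :: real
  assumes "25600 \<le> \<alpha>" "0 < d" "n = \<alpha> * d" "\<mu> = k * a / n" "0 \<le> \<mu>"
  shows "(exp 1 - 1) * d ^ 2 \<le> d / sqrt \<alpha> * n"
    and "2 * (exp 1 - 1) * a * k * d ^ 2 / (d / sqrt \<alpha> * n ^ 2) - \<mu> / 20 \<le> - \<mu> / 40"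
proof -
  have sqrt_ge: "160 \<le> sqrt \<alpha>" using real_sqrt_le_mono[OF assms(1)] by simp
  have sqrt_sq: "sqrt \<alpha> * sqrt \<alpha> = \<alpha>" using assms(1) by simp
  have e2: "exp 1 - 1 \<le> (2::real)" using exp_one_le by simp
  have t_n: "d / sqrt \<alpha> * n = sqrt \<alpha> * d ^ 2"
    using assms(1-3) sqrt_sq by (simp add: power2_eq_square field_simps)
  show "(exp 1 - 1) * d ^ 2 \<le> d / sqrt \<alpha> * n"
    unfolding t_n using e2 sqrt_ge by (intro mult_right_mono) auto
  have "d / sqrt \<alpha> * n ^ 2 = (d / sqrt \<alpha> * n) * n" by (simp add: power2_eq_square)
  also have "\<dots> = sqrt \<alpha> * d ^ 2 * n" by (simp only: t_n)
  finally have "d / sqrt \<alpha> * n ^ 2 = sqrt \<alpha> * d ^ 2 * n" .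
  moreover have "0 < n" "0 < sqrt \<alpha>" using assms(1-3) by simp_all
  ultimately have "2 * (exp 1 - 1) * a * k * d ^ 2 / (d / sqrt \<alpha> * n ^ 2) = 2 * (exp 1 - 1) * \<mu> / sqrt \<alpha>"
    unfolding assms(4) using assms(2) by (simp add: field_simps)
  also have "\<dots> \<le> \<mu> / 40"
  proof -
    have "2 * (exp 1 - 1) * \<mu> \<le> 2 * 2 * \<mu>" using e2 assms(5) by (intro mult_right_mono) auto
    also have "\<dots> = \<mu> / 40 * 160" by simp
    also have "\<dots> \<le> \<mu> / 40 * sqrt \<alpha>" using sqrt_ge assms(5) by (intro mult_left_mono) auto
    finally show ?thesis using sqrt_ge assms(1) by (subst pos_divide_le_eq) auto
  qed
  finally show "2 * (exp 1 - 1) * a * k * d ^ 2 / (d / sqrt \<alpha> * n ^ 2) - \<mu> / 20 \<le> - \<mu> / 40" by simp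
qed

lemma exp_tails_le:
  fixes \<mu> :: real
  assumes "480 \<le> \<mu>"
  shows "exp (- \<mu> / 30) + exp (- \<mu> / 40) + exp (- \<mu> / 120) \<le> exp (- \<mu> / 240)"
proof -
  have "exp (- \<mu> / 30) \<le> exp (- \<mu> / 120)" "exp (- \<mu> / 40) \<le> exp (- \<mu> / 120)"
    using assms by simp_all
  then have "exp (- \<mu> / 30) + exp (- \<mu> / 40) + exp (- \<mu> / 120) \<le> 3 * exp (- \<mu> / 120)"
    by linarith
  also have "\<dots> = (3 * exp (- \<mu> / 240)) * exp (- \<mu> / 240)" by (simp add: exp_add[symmetric])
  also have "\<dots> \<le> exp (- \<mu> / 240)"
  proof -
    have "3 \<le> exp (\<mu> / 240)" using exp_ge_add_one_self[of "\<mu> / 240"] assms by linarith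
    then have "3 * exp (- \<mu> / 240) \<le> 1" by (simp add: exp_minus field_simps)
    then show ?thesis by (simp add: mult_left_le_one_le)
  qed
  finally show ?thesis .
qed

lemma prob_many_bad_hits_le_mean:
  fixes \<alpha> :: real
  assumes \<alpha>: "25600 \<le> \<alpha>" and "0 < d"
    and graph: "\<And>u v. E u v \<Longrightarrow> E v u" "\<And>v. finite (nbhd E v)" "\<And>v. card (nbhd E v) \<le> d"
    and "finite Y" "S \<subseteq> Y" "finite V" "A \<subseteq> V" and V: "real (card V) = \<alpha> * d"
  defines "\<mu> \<equiv> real (card S) * card A / card V"
  shows "measure_pmf.prob (pmf_of_set (Y \<rightarrow>\<^sub>E V))
      {f. \<mu> / 20 < card {y\<in>S. f y \<in> A \<and> real d / sqrt \<alpha> < Bad_outside E Y S f y (f y)}}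
    \<le> exp (- \<mu> / 40)"
proof -
  note exponent = bad_hits_exponent_le[OF \<alpha> _ V, of \<mu> "card A" "card S"]
  have "V \<noteq> {}" using V \<alpha> \<open>0 < d\<close> by auto
  then have "measure_pmf.prob (pmf_of_set (Y \<rightarrow>\<^sub>E V))
      {f. \<mu> / 20 < card {y\<in>S. f y \<in> A \<and> real d / sqrt \<alpha> < Bad_outside E Y S f y (f y)}}
    \<le> exp (2 * (exp 1 - 1) * card A * card S * real d ^ 2 / (real d / sqrt \<alpha> * real (card V) ^ 2) - \<mu> / 20)"
    using exponent(1) \<open>0 < d\<close> \<alpha> assms(6-9)
    by (intro prob_many_bad_hits_le[OF _ _ _ _ _ _ graph]) (auto simp: \<mu>_def)
  also have "\<dots> \<le> exp (- \<mu> / 40)"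
    using exponent(2) \<open>0 < d\<close> by (simp add: \<mu>_def mult_ac)
  finally show ?thesis .
qed

lemma prob_W_le_half_mean:
  fixes EG EH :: "nat \<Rightarrow> nat \<Rightarrow> bool" and x c d :: nat and \<alpha> :: real
  assumes \<alpha>: "25600 \<le> \<alpha>" and "0 < d"
    and graph: "\<And>u v. EG u v \<Longrightarrow> EG v u" "\<And>v. finite (nbhd EG v)" "\<And>v. card (nbhd EG v) \<le> d"
    and Y: "finite Y" "nbhd EG x \<subseteq> Y" and V: "finite V" "nbhd EH c \<subseteq> V" "real (card V) = \<alpha> * d"
  defines "\<mu> \<equiv> real (card (nbhd EG x)) * card (nbhd EH c) / card V"
  assumes \<mu>: "480 \<le> \<mu>"
  shows "measure_pmf.prob (pmf_of_set (Y \<rightarrow>\<^sub>E V)) {col. real (W EG Y EH \<alpha> d col x c) \<le> \<mu> / 2}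
    \<le> exp (- \<mu> / 240)"
proof -
  define S where "S = nbhd EG x"
  define A where "A = nbhd EH c"
  define q where "q = nat \<lfloor>\<mu> / 60\<rfloor>"
  let ?P = "measure_pmf.prob (pmf_of_set (Y \<rightarrow>\<^sub>E V))"
  let ?ET = "{col. real (card {y\<in>S. col y \<in> A}) \<le> 3/5 * \<mu>}"
  let ?EU = "{col. \<mu> / 20 < card {y\<in>S. col y \<in> A \<and> real d / sqrt \<alpha> < Bad_outside EG Y S col y (col y)}}"
  let ?EN = "{col. 3 * q \<le> card (repeated_hits col S A)}"
  have n0: "0 < real (card V)" using V(3) \<alpha> \<open>0 < d\<close> by simp
  then have "V \<noteq> {}" by auto
  have "real q = of_int \<lfloor>\<mu> / 60\<rfloor>" using \<mu> by (simp add: q_def)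
  then have "\<mu> / 60 - 1 < real q" "real q \<le> \<mu> / 60" by linarith+
  then have q: "real (3 * q) \<le> \<mu> / 20" "\<mu> / 120 \<le> real q" "1 \<le> q" using \<mu> by auto
  have "?P ?ET \<le> exp (- \<mu> / 30)"
    unfolding \<mu>_def S_def A_def by (rule prob_few_hits_le[OF Y V(1,2) \<open>V \<noteq> {}\<close>])
  moreover have "?P ?EU \<le> exp (- \<mu> / 40)"
    unfolding \<mu>_def S_def A_def by (rule prob_many_bad_hits_le_mean[OF \<alpha> \<open>0 < d\<close> graph Y V])
  moreover have "?P ?EN \<le> exp (- \<mu> / 120)"
  proof -
    have "?P ?EN \<le> real ((card S * card S) choose q) * real (card A) ^ q / real (card V) ^ (2 * q)"
      unfolding S_def A_def by (rule prob_repeated_hits_le[OF Y V(1,2) \<open>V \<noteq> {}\<close>])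
    also have "\<dots> \<le> exp (- \<mu> / 120)"
      using n0 q \<alpha> \<mu> graph(3)[of x] V(3)
      by (intro choose_square_bound_le_exp[where \<alpha> = \<alpha>]) (auto simp: \<mu>_def S_def A_def mult.commute)
    finally show ?thesis .
  qed
  moreover have "?P {col. real (W EG Y EH \<alpha> d col x c) \<le> \<mu> / 2} \<le> ?P (?ET \<union> ?EU \<union> ?EN)"
    unfolding S_def A_def by (intro measure_pmf.finite_measure_mono W_le_half_mean_subset graph(2) q(1)) simp
  moreover have "?P (?ET \<union> ?EU \<union> ?EN) \<le> ?P ?ET + ?P ?EU + ?P ?EN"
    using measure_Un_le[of ?ET "measure_pmf (pmf_of_set (Y \<rightarrow>\<^sub>E V))" ?EU]
      measure_Un_le[of "?ET \<union> ?EU" "measure_pmf (pmf_of_set (Y \<rightarrow>\<^sub>E V))" ?EN] by simp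
  ultimately show ?thesis using exp_tails_le[OF \<mu>] by linarith
qed

lemma simple_graph_nbhd_subset: "simple_graph V E \<Longrightarrow> nbhd E v \<subseteq> V"
  by (auto simp: simple_graph_def nbhd_def)

lemma simple_graph_card_nbhd_le:
  assumes "simple_graph V E" "\<forall>v\<in>V. deg E v \<le> d"
  shows "card (nbhd E v) \<le> d"
proof (cases "v \<in> V")
  case False
  then have "nbhd E v = {}" using assms(1) by (auto simp: simple_graph_def nbhd_def)
  then show ?thesis by simp
qed (use assms(2) in \<open>simp add: deg_def\<close>)

lemma min_deg_le_deg: "simple_graph V E \<Longrightarrow> v \<in> V \<Longrightarrow> min_deg V E \<le> deg E v"
  unfolding min_deg_def simple_graph_def by (intro Min_le) auto

lemma bipartite_graph_nbhd_subset: "bipartite_graph X Y E \<Longrightarrow> x \<in> X \<Longrightarrow> nbhd E x \<subseteq> Y"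
  by (auto simp: bipartite_graph_def nbhd_def)

lemma simple_graph_sym: "simple_graph V E \<Longrightarrow> E u v \<Longrightarrow> E v u"
  by (simp add: simple_graph_def)

lemma simple_graph_finite_nbhd:
  assumes "simple_graph V E" shows "finite (nbhd E v)"
  using finite_subset[OF simple_graph_nbhd_subset[OF assms]] assms by (simp add: simple_graph_def)

lemma min_deg_le_mean:
  fixes \<alpha> :: real and EG :: "nat \<Rightarrow> nat \<Rightarrow> bool" and x :: nat
  assumes "simple_graph VH EH" "c \<in> VH" "real (card VH) = \<alpha> * real d" "0 < \<alpha>" "0 < d"
  defines "\<mu> \<equiv> real (deg EG x) * deg EH c / card VH"
  shows "real (min_deg VH EH) / (\<alpha> * real d) * real (deg EG x) / 2 \<le> \<mu> / 2"
    and "d \<le> 2 * deg EG x \<Longrightarrow> real (min_deg VH EH) / (2 * \<alpha>) \<le> \<mu>"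
proof -
  have \<delta>: "real (min_deg VH EH) \<le> real (deg EH c)" using min_deg_le_deg[OF assms(1,2)] by simp
  then have "real (min_deg VH EH) * deg EG x \<le> real (deg EH c) * deg EG x" by (rule mult_right_mono) simp
  then show "real (min_deg VH EH) / (\<alpha> * real d) * real (deg EG x) / 2 \<le> \<mu> / 2"
    using assms(3-5) by (simp add: \<mu>_def divide_right_mono mult.commute)
  assume "d \<le> 2 * deg EG x"
  then have "real d * min_deg VH EH \<le> (2 * real (deg EG x)) * deg EH c"
    using \<delta> by (intro mult_mono) auto
  then show "real (min_deg VH EH) / (2 * \<alpha>) \<le> \<mu>" using assms(3-5) by (simp add: \<mu>_def field_simps)
qed

lemma prob_W_small_le:
  fixes \<alpha> :: real
  assumes \<alpha>: "25600 \<le> \<alpha>" and \<delta>: "960 * \<alpha> \<le> real (min_deg VH EH)" and "0 < d"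
    and H: "simple_graph VH EH" "real (card VH) = \<alpha> * real d" "c \<in> VH"
    and G: "bipartite_graph X Y EG" "\<forall>v \<in> X \<union> Y. deg EG v \<le> d" "x \<in> X" "d \<le> 2 * deg EG x"
  shows "measure_pmf.prob (random_colouring Y VH)
      {col. real (W EG Y EH \<alpha> d col x c) \<le> (real (min_deg VH EH) / (\<alpha> * real d)) * real (deg EG x) / 2}
    \<le> exp (- (1 / (480 * \<alpha>)) * real (min_deg VH EH))"
proof -
  define \<mu> where "\<mu> = real (deg EG x) * deg EH c / card VH"
  have "0 < \<alpha>" using \<alpha> by simp
  note mean = min_deg_le_mean[OF H(1,3,2) \<open>0 < \<alpha>\<close> \<open>0 < d\<close>, where EG = EG and x = x, folded \<mu>_def]
  have simple: "simple_graph (X \<union> Y) EG" using G(1) by (simp add: bipartite_graph_def)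
  have "measure_pmf.prob (random_colouring Y VH)
      {col. real (W EG Y EH \<alpha> d col x c) \<le> (real (min_deg VH EH) / (\<alpha> * real d)) * real (deg EG x) / 2}
    \<le> measure_pmf.prob (pmf_of_set (Y \<rightarrow>\<^sub>E VH)) {col. real (W EG Y EH \<alpha> d col x c) \<le> \<mu> / 2}"
    unfolding random_colouring_def using mean(1) by (intro measure_pmf.finite_measure_mono) auto
  also have "\<dots> \<le> exp (- \<mu> / 240)"
    unfolding \<mu>_def deg_def
  proof (rule prob_W_le_half_mean[OF \<alpha> \<open>0 < d\<close> simple_graph_sym[OF simple] simple_graph_finite_nbhd[OF simple]
        simple_graph_card_nbhd_le[OF simple G(2)] _ bipartite_graph_nbhd_subset[OF G(1,3)]
        _ simple_graph_nbhd_subset[OF H(1)] H(2)])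
    show "finite Y" "finite VH" using simple H(1) by (simp_all add: simple_graph_def)
    have "480 \<le> real (min_deg VH EH) / (2 * \<alpha>)" using \<delta> \<alpha> by (simp add: field_simps)
    then show "480 \<le> real (card (nbhd EG x)) * card (nbhd EH c) / card VH"
      using mean(2) G(4) \<alpha> \<open>0 < d\<close> by (simp add: \<mu>_def deg_def)
  qed
  also have "\<dots> \<le> exp (- (1 / (480 * \<alpha>)) * real (min_deg VH EH))"
    using mean(2) G(4) \<alpha> \<open>0 < d\<close> by (simp add: field_simps)
  finally show ?thesis .
qed

lemma le_powr_of_root_le:
  fixes b \<epsilon> :: real
  assumes "0 < \<epsilon>" "0 < b" "b powr (1 / \<epsilon>) \<le> x"
  shows "b \<le> x powr \<epsilon>"
proof -
  have "(b powr (1 / \<epsilon>)) powr \<epsilon> \<le> x powr \<epsilon>" using assms by (intro powr_mono2) auto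
  then show ?thesis using assms(1,2) by (simp add: powr_powr)
qed

theorem lemma8:
  fixes \<epsilon> \<beta> :: real
  assumes "\<epsilon> > 0" and "\<beta> > 0"
  shows "\<exists>\<alpha>0. \<forall>\<alpha> \<ge> \<alpha>0. \<exists>C > 0. \<exists>d0::nat. \<forall>d \<ge> d0.
    \<forall>VH EH X Y EG x c.
      simple_graph VH EH \<longrightarrow> real (card VH) = \<alpha> * real d \<longrightarrow>
      real (max_deg VH EH) \<le> \<beta> * real (min_deg VH EH) \<longrightarrow>
      real (min_deg VH EH) > real d powr \<epsilon> \<longrightarrow>
      bipartite_graph X Y EG \<longrightarrow> (\<forall>v \<in> X \<union> Y. deg EG v \<le> d) \<longrightarrow>
      x \<in> X \<longrightarrow> d \<le> 2 * deg EG x \<longrightarrow> c \<in> VH \<longrightarrow>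
      measure_pmf.prob (random_colouring Y VH)
        {col. real (W EG Y EH \<alpha> d col x c)
              \<le> (real (min_deg VH EH) / (\<alpha> * real d)) * real (deg EG x) / 2}
      \<le> exp (- C * real (min_deg VH EH))"
proof -
  have bound: "measure_pmf.prob (random_colouring Y VH)
        {col. real (W EG Y EH \<alpha> d col x c) \<le> (real (min_deg VH EH) / (\<alpha> * real d)) * real (deg EG x) / 2}
      \<le> exp (- (1 / (480 * \<alpha>)) * real (min_deg VH EH))"
    if \<alpha>: "25600 \<le> \<alpha>" and d: "nat \<lceil>(960 * \<alpha>) powr (1 / \<epsilon>)\<rceil> + 1 \<le> d"
      and H: "simple_graph VH EH" "real (card VH) = \<alpha> * real d"
      and \<delta>: "real (min_deg VH EH) > real d powr \<epsilon>"
      and G: "bipartite_graph X Y EG" "\<forall>v \<in> X \<union> Y. deg EG v \<le> d" "x \<in> X" "d \<le> 2 * deg EG x"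
      and "c \<in> VH"
    for \<alpha> d VH EH X Y EG x c
  proof (rule prob_W_small_le[OF \<alpha> _ _ H \<open>c \<in> VH\<close> G])
    have "(960 * \<alpha>) powr (1 / \<epsilon>) \<le> real d" using d by linarith
    then have "960 * \<alpha> \<le> real d powr \<epsilon>" using assms(1) \<alpha> by (intro le_powr_of_root_le) auto
    then show "960 * \<alpha> \<le> real (min_deg VH EH)" using \<delta> by linarith
    show "0 < d" using d by simp
  qed
  have "0 < 1 / (480 * \<alpha>)" if "25600 \<le> \<alpha>" for \<alpha> :: real using that by simp
  with bound show ?thesis by blast
qed

end
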